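(* Let $(V,\mathcal H,\iota,W)$ be an abelian functional theory with set of weights $\Omega$ and let $\rho\in\mathrm{conv}(\Omega)$. Then $\rho$ is a critical value of the smooth map $\iota^*|_{\mathcal P}:\mathcal P\to\mathrm{aff}(\Omega)$ if and only if $\rho$ lies in the convex hull of some $\dim\mathrm{conv}(\Omega)$ $(=\dim V-\dim\iota^{-1}(\mathrm{span}\{\mathbb 1\}))$ weights.
   Context: A generalized functional theory is a tuple $(V,\mathcal H,\iota,W)$ with $V$ a finite-dimensional real vector space, $\mathcal H$ a finite-dimensional complex Hilbert space, $\iota:V\to i\mathfrak u(\mathcal H)$ linear into the Hermitian operators, $W$ Hermitian; it is abelian if all $\iota(v)$ commute. States are regarded as linear functionals on $i\mathfrak u(\mathcal H)$ via the trace and $\iota^*$ is the dual map; $\mathcal P$, the set of pure states, is a smooth manifold (projective space). A weight is $\alpha\in V^*$ such that some nonzero $\psi$ satisfies $\iota(v)\psi=\langle\alpha,v\rangle\psi$ for all $v$; $\Omega$ is the set of weights, and $\iota^*(\mathcal P)=\mathrm{conv}(\Omega)$. A point is a critical value of a smooth map if it is not a regular value, i.e. the derivative fails to be surjective at some point of its preimage. *)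

theory Defs
  imports "HOL-Analysis.Analysis"
begin

text \<open>Hilbert space H = complex^'n, operators = complex^'n^'n.\<close>

definition hermitian :: "complex^'n^'n \<Rightarrow> bool" where
  "hermitian A \<longleftrightarrow> (\<forall>i j. A $ i $ j = cnj (A $ j $ i))"

definition cinner :: "complex^'n \<Rightarrow> complex^'n \<Rightarrow> complex" where
  "cinner \<psi> \<phi> = (\<Sum>i\<in>UNIV. cnj (\<psi> $ i) * \<phi> $ i)"

text \<open>Generalized functional theory (V,H,iota,W); V is a euclidean space and
  V* is identified with V via the inner product: a functional alpha acts by v |-> alpha \<bullet> v.\<close>

definition functional_theory :: "('v::euclidean_space \<Rightarrow> complex^'n^'n) \<Rightarrow> complex^'n^'n \<Rightarrow> bool" where
  "functional_theory \<iota> W \<longleftrightarrow> linear \<iota> \<and> (\<forall>v. hermitian (\<iota> v)) \<and> hermitian W"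

definition abelian_theory :: "('v::euclidean_space \<Rightarrow> complex^'n^'n) \<Rightarrow> complex^'n^'n \<Rightarrow> bool" where
  "abelian_theory \<iota> W \<longleftrightarrow> functional_theory \<iota> W \<and> (\<forall>u v. \<iota> u ** \<iota> v = \<iota> v ** \<iota> u)"

definition weights :: "('v::euclidean_space \<Rightarrow> complex^'n^'n) \<Rightarrow> 'v set" where
  "weights \<iota> = {\<alpha>. \<exists>\<psi>. \<psi> \<noteq> 0 \<and> (\<forall>v. \<iota> v *v \<psi> = complex_of_real (\<alpha> \<bullet> v) *s \<psi>)}"

text \<open>The map iota^* restricted to pure states, lifted to nonzero vectors psi
  (the pure state [psi] = |psi><psi| / <psi,psi>):
  its value is the functional v |-> <psi, iota(v) psi> / <psi,psi>, represented in V.\<close>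

definition istar :: "('v::euclidean_space \<Rightarrow> complex^'n^'n) \<Rightarrow> complex^'n \<Rightarrow> 'v" where
  "istar \<iota> \<psi> = (\<Sum>b\<in>Basis. (Re (cinner \<psi> (\<iota> b *v \<psi>)) / Re (cinner \<psi> \<psi>)) *\<^sub>R b)"

definition aff_direction :: "'v::real_vector set \<Rightarrow> 'v set" where
  "aff_direction S = {x - y | x y. x \<in> affine hull S \<and> y \<in> affine hull S}"

text \<open>Since the quotient
  map (complex^'n - {0}) -> P is a surjective submersion, this is tested on the lift.\<close>

definition critical_value :: "('v::euclidean_space \<Rightarrow> complex^'n^'n) \<Rightarrow> 'v \<Rightarrow> bool" where
  "critical_value \<iota> \<rho> \<longleftrightarrow>
     (\<exists>\<psi>. \<psi> \<noteq> 0 \<and> istar \<iota> \<psi> = \<rho> \<and>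
        (\<forall>D. (istar \<iota> has_derivative D) (at \<psi>) \<longrightarrow> range D \<noteq> aff_direction (weights \<iota>)))"

end

(*
  The commuting Hermitian operators iota(v) have an orthonormal basis F of common
  eigenvectors; if e in F has weight omega(e), then for psi /= 0

    iota^*[psi] = sum_e |<e,psi>|^2 omega(e) / |psi|^2,

  a convex combination of the weights occurring in psi.  Differentiating this formula shows
  that the image of the derivative at psi is the linear span of omega(e) - iota^*[psi] over
  the e with <e,psi> /= 0, i.e. the direction space of the affine hull of those weights.
  Hence rho is critical iff rho = iota^*[psi] for some psi whose weights span an affine
  subspace of dimension smaller than dim conv(Omega).  Caratheodory's theorem turns this into
  rho lying in the convex hull of dim conv(Omega) weights; conversely, a convex combination
  sum a_i alpha_i is attained by psi = sum sqrt(a_i) e_i, whose weights are the alpha_i.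
*)
theory Submission
  imports Defs
begin

section \<open>Inner products and Hermitian matrices\<close>

lemma cinner_zero_right [simp]: "cinner x 0 = 0"
  by (simp add: cinner_def)

lemma cinner_add_right: "cinner x (y + z) = cinner x y + cinner x z"
  by (simp add: cinner_def distrib_left sum.distrib)

lemma cinner_diff_right: "cinner x (y - z) = cinner x y - cinner x z"
  by (simp add: cinner_def right_diff_distrib sum_subtractf)

lemma cinner_smult_right: "cinner x (c *s y) = c * cinner x y"
  by (simp add: cinner_def sum_distrib_left algebra_simps)

lemma cinner_smult_left: "cinner (c *s x) y = cnj c * cinner x y"
  by (simp add: cinner_def sum_distrib_left algebra_simps)

lemma smult_of_real: "(of_real r :: complex) *s x = r *\<^sub>R x"
proof -
  have "r *\<^sub>R z = of_real r * z" for z :: complex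
    by (simp add: scaleR_conv_of_real)
  then show ?thesis by (simp add: vec_eq_iff)
qed

lemma cinner_scaleR_right: "cinner x (r *\<^sub>R y) = of_real r * cinner x y"
  by (simp flip: smult_of_real add: cinner_smult_right)

lemma cinner_scaleR_left: "cinner (r *\<^sub>R x) y = of_real r * cinner x y"
  by (simp flip: smult_of_real add: cinner_smult_left)

lemma cinner_sum_right: "cinner x (\<Sum>i\<in>I. f i) = (\<Sum>i\<in>I. cinner x (f i))"
  by (induction I rule: infinite_finite_induct) (auto simp: cinner_add_right)

lemma cinner_commute: "cinner y x = cnj (cinner x y)"
  by (simp add: cinner_def mult.commute)

lemma Re_cinner: "Re (cinner x y) = x \<bullet> y"
  by (simp add: cinner_def inner_vec_def inner_complex_def Re_sum)

lemma cinner_self: "cinner x x = of_real ((norm x)\<^sup>2)"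
proof -
  have "Im (cinner x x) = 0"
    by (simp add: cinner_def Im_sum)
  then show ?thesis
    by (simp add: complex_eq_iff Re_cinner power2_norm_eq_inner)
qed

lemma bounded_linear_cinner_right: "bounded_linear (cinner x)"
proof (rule linear_conv_bounded_linear[THEN iffD1], rule linearI)
  show "cinner x (r *\<^sub>R y) = r *\<^sub>R cinner x y" for r y
    by (simp add: cinner_scaleR_right) (simp add: scaleR_conv_of_real)
qed (rule cinner_add_right)

lemma hermitian_cinner_adjoint:
  assumes "hermitian A"
  shows "cinner x (A *v y) = cinner (A *v x) y"
proof -
  have "cinner x (A *v y) = (\<Sum>i\<in>UNIV. \<Sum>j\<in>UNIV. cnj (x$i) * (A$i$j * y$j))"
    by (simp add: cinner_def matrix_vector_mult_def sum_distrib_left)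
  also have "\<dots> = (\<Sum>j\<in>UNIV. \<Sum>i\<in>UNIV. cnj (A$j$i * x$i) * y$j)"
  proof (subst sum.swap, intro sum.cong refl)
    fix i j
    have "A$i$j = cnj (A$j$i)"
      using assms unfolding hermitian_def by blast
    then show "cnj (x$i) * (A$i$j * y$j) = cnj (A$j$i * x$i) * y$j"
      by (simp only: complex_cnj_mult mult_ac)
  qed
  also have "\<dots> = cinner (A *v x) y"
    by (simp add: cinner_def matrix_vector_mult_def sum_distrib_right cnj_sum)
  finally show ?thesis .
qed

lemma hermitian_inner_adjoint: "hermitian A \<Longrightarrow> x \<bullet> (A *v y) = (A *v x) \<bullet> y"
  by (metis Re_cinner hermitian_cinner_adjoint)

lemma matrix_vector_scaleR_commute: "A *v (c *\<^sub>R x) = c *\<^sub>R (A *v (x :: 'a::real_algebra_1^'n))"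
  by (simp add: vec_eq_iff matrix_vector_mult_def scaleR_sum_right)

lemma matrix_vector_mult_linear_left: "linear (\<lambda>A. A *v (x :: 'a::real_algebra_1^'n))"
  by (rule linearI) (simp_all add: vec_eq_iff matrix_vector_mult_def sum.distrib
      distrib_right scaleR_sum_right)

section \<open>Simultaneous diagonalisation\<close>

lemma quadratic_nonpos_imp_linear_coeff_eq_0:
  fixes a q :: real
  assumes "\<And>t. t * a + t\<^sup>2 * q \<le> 0"
  shows "a = 0"
proof (rule ccontr)
  assume "a \<noteq> 0"
  define s where "s = \<bar>q\<bar> + 1"
  define t where "t = a / s"
  have "s > 0" "\<bar>q\<bar> = s - 1"
    by (simp_all add: s_def)
  have "t * a + t\<^sup>2 * q \<ge> t * a - t\<^sup>2 * \<bar>q\<bar>"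
    using mult_left_mono[of "- \<bar>q\<bar>" q "t\<^sup>2"] by simp
  moreover have "t * a - t\<^sup>2 * \<bar>q\<bar> = (a / s)\<^sup>2"
    unfolding \<open>\<bar>q\<bar> = s - 1\<close> t_def using \<open>s > 0\<close> by (simp add: field_simps power2_eq_square)
  moreover have "(a / s)\<^sup>2 > 0"
    using \<open>a \<noteq> 0\<close> \<open>s > 0\<close> by simp
  ultimately show False
    using assms[of t] by linarith
qed

lemma nonpos_symmetric_isotropic_in_kernel:
  fixes B :: "'a::real_inner \<Rightarrow> 'a"
  assumes "linear B" and sym: "\<And>x y. x \<bullet> B y = B x \<bullet> y"
    and "subspace U" "\<And>x. x \<in> U \<Longrightarrow> B x \<in> U" and nonpos: "\<And>x. x \<in> U \<Longrightarrow> x \<bullet> B x \<le> 0"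
    and "\<psi> \<in> U" "\<psi> \<bullet> B \<psi> = 0"
  shows "B \<psi> = 0"
proof -
  have "2 * (w \<bullet> B \<psi>) = 0" if "w \<in> U" for w
  proof (rule quadratic_nonpos_imp_linear_coeff_eq_0)
    fix t
    have "\<psi> \<bullet> B w = w \<bullet> B \<psi>"
      using sym[of \<psi> w] by (simp add: inner_commute)
    then have expand: "(\<psi> + t *\<^sub>R w) \<bullet> B (\<psi> + t *\<^sub>R w) = t * (2 * (w \<bullet> B \<psi>)) + t\<^sup>2 * (w \<bullet> B w)"
      using \<open>\<psi> \<bullet> B \<psi> = 0\<close>
      by (simp add: linear_add[OF \<open>linear B\<close>] linear_scale[OF \<open>linear B\<close>] inner_add_left
          inner_add_right power2_eq_square algebra_simps)
    have "\<psi> + t *\<^sub>R w \<in> U"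
      using \<open>subspace U\<close> \<open>\<psi> \<in> U\<close> that by (simp add: subspace_add subspace_scale)
    from nonpos[OF this] show "t * (2 * (w \<bullet> B \<psi>)) + t\<^sup>2 * (w \<bullet> B w) \<le> 0"
      unfolding expand .
  qed
  then have "B \<psi> \<bullet> B \<psi> = 0"
    using assms(4)[OF \<open>\<psi> \<in> U\<close>] by simp
  then show ?thesis
    by simp
qed

lemma hermitian_eigenvector_in_invariant_subspace:
  fixes A :: "complex^'n^'n"
  assumes "hermitian A" "subspace U" "\<And>x. x \<in> U \<Longrightarrow> A *v x \<in> U" "x\<^sub>0 \<in> U" "x\<^sub>0 \<noteq> 0"
  shows "\<exists>m::real. \<exists>\<psi>\<in>U. \<psi> \<noteq> 0 \<and> A *v \<psi> = m *\<^sub>R \<psi>"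
proof -
  define R where "R \<phi> = \<phi> \<bullet> (A *v \<phi>)" for \<phi> :: "complex^'n"
  define K where "K = sphere 0 1 \<inter> U"
  have "compact K"
    unfolding K_def using assms(2) by (intro compact_Int_closed compact_sphere closed_subspace)
  moreover have "(1 / norm x\<^sub>0) *\<^sub>R x\<^sub>0 \<in> K"
    using assms(2,4,5) by (auto simp: K_def subspace_scale)
  moreover have "continuous_on K R"
    unfolding R_def
    by (intro continuous_on_inner continuous_on_id linear_continuous_on
        linear_conv_bounded_linear[THEN iffD1] matrix_vector_mul_linear)
  ultimately obtain \<psi> where "\<psi> \<in> K" and max: "\<And>y. y \<in> K \<Longrightarrow> R y \<le> R \<psi>"
    using continuous_attains_sup[of K R] by blast
  then have "\<psi> \<in> U" "norm \<psi> = 1"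
    by (auto simp: K_def)
  define m where "m = R \<psi>"
  define B where "B \<phi> = A *v \<phi> - m *\<^sub>R \<phi>" for \<phi>
  have "linear B"
    by (rule linearI) (simp_all add: B_def matrix_vector_right_distrib matrix_vector_scaleR_commute
        algebra_simps)
  moreover have "x \<bullet> B y = B x \<bullet> y" for x y
    using hermitian_inner_adjoint[OF assms(1)] by (simp add: B_def inner_diff_left inner_diff_right)
  moreover have "B x \<in> U" if "x \<in> U" for x
    using assms(2,3) that by (simp add: B_def subspace_diff subspace_scale)
  moreover have "\<phi> \<bullet> B \<phi> \<le> 0" if "\<phi> \<in> U" for \<phi>
  proof (cases "\<phi> = 0")
    case False
    then have "(1 / norm \<phi>) *\<^sub>R \<phi> \<in> K"
      using that assms(2) by (auto simp: K_def subspace_scale)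
    from max[OF this] have "R \<phi> / (norm \<phi>)\<^sup>2 \<le> m"
      by (simp add: m_def R_def matrix_vector_scaleR_commute power2_eq_square)
    then have "R \<phi> \<le> m * (\<phi> \<bullet> \<phi>)"
      using False by (simp add: divide_le_eq power2_norm_eq_inner)
    then show ?thesis
      by (simp add: B_def R_def inner_diff_right)
  qed (simp add: B_def)
  moreover have "\<psi> \<bullet> B \<psi> = 0"
    using \<open>norm \<psi> = 1\<close> by (simp add: B_def R_def m_def inner_diff_right power2_norm_eq_inner[symmetric])
  ultimately have "B \<psi> = 0"
    using nonpos_symmetric_isotropic_in_kernel[OF _ _ assms(2)] \<open>\<psi> \<in> U\<close> by blast
  moreover have "\<psi> \<noteq> 0"
    using \<open>norm \<psi> = 1\<close> by auto
  ultimately show ?thesis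
    using \<open>\<psi> \<in> U\<close> by (auto simp: B_def)
qed

lemma common_eigenvector_in_invariant_subspace:
  fixes M :: "(complex^'n^'n) set"
  assumes herm: "\<And>A. A \<in> M \<Longrightarrow> hermitian A"
    and comm: "\<And>A B. A \<in> M \<Longrightarrow> B \<in> M \<Longrightarrow> A ** B = B ** A"
    and U: "subspace U" "\<And>A x. A \<in> M \<Longrightarrow> x \<in> U \<Longrightarrow> A *v x \<in> U" "x\<^sub>0 \<in> U" "x\<^sub>0 \<noteq> 0"
  shows "\<exists>\<psi>\<in>U. \<psi> \<noteq> 0 \<and> (\<forall>A\<in>M. \<exists>m::real. A *v \<psi> = m *\<^sub>R \<psi>)"
proof -
  define invariant where "invariant W \<longleftrightarrow>
    W \<subseteq> U \<and> subspace W \<and> (\<forall>A\<in>M. \<forall>x\<in>W. A *v x \<in> W) \<and> (\<exists>x\<in>W. x \<noteq> 0)" for W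
  have "invariant U"
    using U by (auto simp: invariant_def)
  then obtain W where W: "invariant W" and minimal: "\<And>W'. invariant W' \<Longrightarrow> dim W \<le> dim W'"
    using ex_has_least_nat[of invariant U dim] by blast
  \<comment> \<open>as \<open>M\<close> commutes, an eigenspace of \<open>A\<close> inside \<open>W\<close> is invariant, so by minimality it is all of \<open>W\<close>\<close>
  have scalar: "\<exists>m::real. \<forall>x\<in>W. A *v x = m *\<^sub>R x" if A: "A \<in> M" for A
  proof -
    have "subspace W" "\<And>x. x \<in> W \<Longrightarrow> A *v x \<in> W" "\<exists>x\<in>W. x \<noteq> 0"
      using W A by (auto simp: invariant_def)
    then obtain m \<psi> where "\<psi> \<in> W" "\<psi> \<noteq> 0" "A *v \<psi> = m *\<^sub>R \<psi>"
      using hermitian_eigenvector_in_invariant_subspace[OF herm[OF A]] by blast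
    define E where "E = W \<inter> {x. A *v x = m *\<^sub>R x}"
    have "subspace {x. A *v x = m *\<^sub>R x}"
      by (auto simp: subspace_def matrix_vector_right_distrib matrix_vector_scaleR_commute
          scaleR_add_right)
    then have "subspace E"
      using W by (simp add: E_def invariant_def subspace_inter)
    moreover have "B *v x \<in> E" if "B \<in> M" "x \<in> E" for B x
    proof -
      have "A *v (B *v x) = B *v (A *v x)"
        using comm[OF \<open>A \<in> M\<close> that(1)] by (simp add: matrix_vector_mul_assoc)
      then show ?thesis
        using W that by (simp add: E_def invariant_def matrix_vector_scaleR_commute)
    qed
    ultimately have "invariant E"
      using W \<open>\<psi> \<in> W\<close> \<open>\<psi> \<noteq> 0\<close> \<open>A *v \<psi> = m *\<^sub>R \<psi>\<close> by (auto simp: invariant_def E_def)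
    then have "E = W"
      using W minimal[of E] by (intro subspace_dim_equal) (auto simp: invariant_def E_def)
    then show ?thesis
      by (auto simp: E_def)
  qed
  obtain \<psi> where "\<psi> \<in> W" "\<psi> \<noteq> 0"
    using W by (auto simp: invariant_def)
  moreover have "\<forall>A\<in>M. \<exists>m::real. A *v \<psi> = m *\<^sub>R \<psi>"
    using scalar \<open>\<psi> \<in> W\<close> by blast
  ultimately show ?thesis
    using W by (auto simp: invariant_def)
qed

lemma weight_of_common_eigenvector:
  fixes \<iota> :: "'v::euclidean_space \<Rightarrow> complex^'n^'n"
  assumes "linear \<iota>" "\<And>v. \<exists>m::real. \<iota> v *v \<psi> = m *\<^sub>R \<psi>"
  shows "\<exists>\<alpha>. \<forall>v. \<iota> v *v \<psi> = (\<alpha> \<bullet> v) *\<^sub>R \<psi>"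
proof -
  obtain m where m: "\<And>v. \<iota> v *v \<psi> = m v *\<^sub>R \<psi>"
    using assms(2) by metis
  have lin: "linear (\<lambda>v. \<iota> v *v \<psi>)"
    using linear_compose[OF assms(1) matrix_vector_mult_linear_left] by (simp add: o_def)
  have "\<iota> v *v \<psi> = ((\<Sum>b\<in>Basis. m b *\<^sub>R b) \<bullet> v) *\<^sub>R \<psi>" for v
  proof -
    have "\<iota> v *v \<psi> = (\<Sum>b\<in>Basis. (v \<bullet> b) *\<^sub>R (\<iota> b *v \<psi>))"
      by (subst euclidean_representation[symmetric, of v]) (simp add: linear_sum[OF lin] linear_scale[OF lin])
    also have "\<dots> = (\<Sum>b\<in>Basis. ((v \<bullet> b) * m b) *\<^sub>R \<psi>)"
      by (simp add: m)
    also have "\<dots> = ((\<Sum>b\<in>Basis. m b *\<^sub>R b) \<bullet> v) *\<^sub>R \<psi>"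
      by (simp add: inner_sum_left scaleR_sum_left inner_commute[of v] mult.commute)
    finally show ?thesis .
  qed
  then show ?thesis by blast
qed

definition orthonormal_weight_family :: "('v::euclidean_space \<Rightarrow> complex^'n^'n) \<Rightarrow> (complex^'n) set \<Rightarrow> bool"
  where "orthonormal_weight_family \<iota> F \<longleftrightarrow> finite F \<and>
    (\<forall>e\<in>F. \<forall>e'\<in>F. cinner e e' = (if e = e' then 1 else 0)) \<and>
    (\<forall>e\<in>F. \<exists>\<alpha>. \<forall>v. \<iota> v *v e = (\<alpha> \<bullet> v) *\<^sub>R e)"

lemma card_orthonormal_weight_family_le:
  fixes F :: "(complex^'n) set"
  assumes "orthonormal_weight_family \<iota> F"
  shows "card F \<le> DIM(complex^'n)"
proof -
  have orth: "cinner e e' = (if e = e' then 1 else 0)" if "e \<in> F" "e' \<in> F" for e e'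
    using assms that unfolding orthonormal_weight_family_def by blast
  have "x \<bullet> y = 0" if "x \<in> F" "y \<in> F" "x \<noteq> y" for x y
    using orth[OF that(1,2)] that(3) Re_cinner[of x y] by simp
  then have "pairwise orthogonal F"
    by (simp add: pairwise_def orthogonal_def)
  moreover have "0 \<notin> F"
  proof
    assume "0 \<in> F"
    then have "cinner 0 (0 :: complex^'n) = 1"
      using orth[of 0 0] by simp
    then show False
      by (simp add: cinner_def)
  qed
  ultimately have "independent F"
    by (rule pairwise_orthogonal_independent)
  then show ?thesis
    using independent_bound[of F] by simp
qed

lemma hermitian_cinner_eigenvector_eq_0:
  assumes "hermitian A" "A *v e = c *\<^sub>R e" "cinner e x = 0"
  shows "cinner e (A *v x) = 0"
  using assms by (simp add: hermitian_cinner_adjoint cinner_scaleR_left)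

lemma cinner_orthonormal_residual:
  assumes "finite F" "\<And>e e'. e \<in> F \<Longrightarrow> e' \<in> F \<Longrightarrow> cinner e e' = (if e = e' then 1 else 0)"
    and "e \<in> F"
  shows "cinner e (\<phi> - (\<Sum>e'\<in>F. cinner e' \<phi> *s e')) = 0"
proof -
  have "(\<Sum>e'\<in>F. cinner e' \<phi> * cinner e e') = (\<Sum>e'\<in>F. if e = e' then cinner e' \<phi> else 0)"
    using assms(2,3) by (intro sum.cong) auto
  then show ?thesis
    using assms(1,3) by (simp add: cinner_diff_right cinner_sum_right cinner_smult_right)
qed

lemma orthonormal_weight_family_insert:
  assumes "orthonormal_weight_family \<iota> F" "cinner e e = 1" "\<And>e'. e' \<in> F \<Longrightarrow> cinner e' e = 0"
    and "\<And>v. \<iota> v *v e = (\<alpha> \<bullet> v) *\<^sub>R e"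
  shows "e \<notin> F" "orthonormal_weight_family \<iota> (insert e F)"
proof -
  show "e \<notin> F"
    using assms(2,3) by force
  moreover have "cinner e e' = 0" if "e' \<in> F" for e'
    using assms(3)[OF that] cinner_commute[of e e'] by simp
  ultimately have "\<forall>x\<in>insert e F. \<forall>y\<in>insert e F. cinner x y = (if x = y then 1 else 0)"
    using assms(1-3) by (auto simp: orthonormal_weight_family_def)
  then show "orthonormal_weight_family \<iota> (insert e F)"
    using assms(1,4) unfolding orthonormal_weight_family_def by blast
qed

lemma orthonormal_weight_family_extend:
  fixes \<iota> :: "'v::euclidean_space \<Rightarrow> complex^'n^'n"
  assumes ab: "abelian_theory \<iota> W" and F: "orthonormal_weight_family \<iota> F"
    and incomplete: "(\<Sum>e\<in>F. cinner e \<phi> *s e) \<noteq> \<phi>"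
  shows "\<exists>e. e \<notin> F \<and> orthonormal_weight_family \<iota> (insert e F)"
proof -
  have herm: "\<And>v. hermitian (\<iota> v)" and "linear \<iota>"
    and comm: "\<And>u v. \<iota> u ** \<iota> v = \<iota> v ** \<iota> u"
    using ab by (auto simp: abelian_theory_def functional_theory_def)
  define U where "U = {x. \<forall>e\<in>F. cinner e x = 0}"
  have "subspace U"
    by (auto simp: subspace_def U_def cinner_add_right cinner_scaleR_right)
  moreover have "\<iota> v *v x \<in> U" if x: "x \<in> U" for v x
  proof -
    have "cinner e (\<iota> v *v x) = 0" if "e \<in> F" for e
    proof -
      obtain \<alpha> where "\<iota> v *v e = (\<alpha> \<bullet> v) *\<^sub>R e"
        using F \<open>e \<in> F\<close> unfolding orthonormal_weight_family_def by blast
      moreover have "cinner e x = 0"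
        using x \<open>e \<in> F\<close> by (simp add: U_def)
      ultimately show ?thesis
        by (rule hermitian_cinner_eigenvector_eq_0[OF herm])
    qed
    then show ?thesis
      by (simp add: U_def)
  qed
  moreover have "\<phi> - (\<Sum>e\<in>F. cinner e \<phi> *s e) \<in> U"
    using F cinner_orthonormal_residual[of F] unfolding U_def orthonormal_weight_family_def by blast
  moreover have "\<phi> - (\<Sum>e\<in>F. cinner e \<phi> *s e) \<noteq> 0"
    using incomplete by simp
  ultimately obtain \<psi> where "\<psi> \<in> U" "\<psi> \<noteq> 0" and eigen: "\<forall>A\<in>range \<iota>. \<exists>m::real. A *v \<psi> = m *\<^sub>R \<psi>"
    using common_eigenvector_in_invariant_subspace[of "range \<iota>" U] herm comm by blast
  obtain \<alpha> where \<alpha>: "\<And>v. \<iota> v *v \<psi> = (\<alpha> \<bullet> v) *\<^sub>R \<psi>"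
    using weight_of_common_eigenvector[OF \<open>linear \<iota>\<close>] eigen by blast
  define e where "e = (1 / norm \<psi>) *\<^sub>R \<psi>"
  have "cinner e e = 1"
    using \<open>\<psi> \<noteq> 0\<close> by (simp add: e_def cinner_scaleR_left cinner_scaleR_right cinner_self power2_eq_square)
  moreover have "cinner e' e = 0" if "e' \<in> F" for e'
    using \<open>\<psi> \<in> U\<close> that by (simp add: U_def e_def cinner_scaleR_right)
  moreover have "\<iota> v *v e = (\<alpha> \<bullet> v) *\<^sub>R e" for v
    by (simp add: e_def matrix_vector_scaleR_commute \<alpha>)
  ultimately show ?thesis
    using orthonormal_weight_family_insert[OF F] by blast
qed

locale weight_basis =
  fixes \<iota> :: "'v::euclidean_space \<Rightarrow> complex^'n^'n" and F :: "(complex^'n) set"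
    and \<omega> :: "complex^'n \<Rightarrow> 'v"
  assumes hermitian: "\<And>v. hermitian (\<iota> v)"
    and finite_basis: "finite F"
    and orthonormal: "\<And>e e'. e \<in> F \<Longrightarrow> e' \<in> F \<Longrightarrow> cinner e e' = (if e = e' then 1 else 0)"
    and expansion: "\<And>\<phi>. (\<Sum>e\<in>F. cinner e \<phi> *s e) = \<phi>"
    and weight_vector: "\<And>e v. e \<in> F \<Longrightarrow> \<iota> v *v e = (\<omega> e \<bullet> v) *\<^sub>R e"

lemma exists_weight_basis:
  fixes \<iota> :: "'v::euclidean_space \<Rightarrow> complex^'n^'n"
  assumes ab: "abelian_theory \<iota> W"
  shows "\<exists>F \<omega>. weight_basis \<iota> F \<omega>"
proof -
  have "orthonormal_weight_family \<iota> {}"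
    by (simp add: orthonormal_weight_family_def)
  then obtain F where F: "orthonormal_weight_family \<iota> F"
    and maximal: "\<And>G. orthonormal_weight_family \<iota> G \<Longrightarrow> card G \<le> card F"
    using ex_has_greatest_nat[of "orthonormal_weight_family \<iota>" "{}" card "DIM(complex^'n) + 1"]
      card_orthonormal_weight_family_le by (metis less_Suc_eq_le Suc_eq_plus1)
  have expansion: "(\<Sum>e\<in>F. cinner e \<phi> *s e) = \<phi>" for \<phi>
  proof (rule ccontr)
    assume "(\<Sum>e\<in>F. cinner e \<phi> *s e) \<noteq> \<phi>"
    then obtain e where "e \<notin> F" "orthonormal_weight_family \<iota> (insert e F)"
      using orthonormal_weight_family_extend[OF ab F] by blast
    then show False
      using maximal[of "insert e F"] F by (simp add: orthonormal_weight_family_def)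
  qed
  define \<omega> where "\<omega> e = (SOME \<alpha>. \<forall>v. \<iota> v *v e = (\<alpha> \<bullet> v) *\<^sub>R e)" for e
  have "\<iota> v *v e = (\<omega> e \<bullet> v) *\<^sub>R e" if "e \<in> F" for e v
  proof -
    have "\<exists>\<alpha>. \<forall>v. \<iota> v *v e = (\<alpha> \<bullet> v) *\<^sub>R e"
      using F that by (simp add: orthonormal_weight_family_def)
    then show ?thesis
      unfolding \<omega>_def by (rule someI_ex[THEN spec])
  qed
  then have "weight_basis \<iota> F \<omega>"
    using ab F expansion
    by unfold_locales (auto simp: abelian_theory_def functional_theory_def orthonormal_weight_family_def)
  then show ?thesis by blast
qed

section \<open>Affine hulls\<close>

lemma affine_hull_eq_translate_aff_direction:
  assumes "a \<in> affine hull S"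
  shows "affine hull S = (\<lambda>x. a + x) ` aff_direction S"
proof
  show "affine hull S \<subseteq> (\<lambda>x. a + x) ` aff_direction S"
  proof
    fix x assume "x \<in> affine hull S"
    then have "x - a \<in> aff_direction S"
      using assms unfolding aff_direction_def by blast
    then show "x \<in> (\<lambda>x. a + x) ` aff_direction S"
      by (rule rev_image_eqI) simp
  qed
  show "(\<lambda>x. a + x) ` aff_direction S \<subseteq> affine hull S"
    using mem_affine_3_minus[OF affine_affine_hull assms, of _ _ 1]
    by (auto simp: aff_direction_def)
qed

lemma aff_direction_eq_span:
  assumes "a \<in> affine hull S"
  shows "aff_direction S = span ((\<lambda>x. x - a) ` S)"
proof -
  have "(\<lambda>x. a + x) ` aff_direction S = (\<lambda>x. a + x) ` span ((\<lambda>x. x - a) ` S)"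
    using affine_hull_span_gen[OF assms] affine_hull_eq_translate_aff_direction[OF assms]
    by simp
  then show ?thesis
    by (simp add: inj_image_eq_iff)
qed

lemma aff_direction_eq_iff_aff_dim_eq:
  fixes A B :: "'a::euclidean_space set"
  assumes "A \<subseteq> B" "a \<in> affine hull A"
  shows "aff_direction A = aff_direction B \<longleftrightarrow> aff_dim A = aff_dim B"
proof
  have "a \<in> affine hull B"
    using assms hull_mono by blast
  assume "aff_direction A = aff_direction B"
  then have "affine hull A = affine hull B"
    using affine_hull_eq_translate_aff_direction[OF assms(2)]
      affine_hull_eq_translate_aff_direction[OF \<open>a \<in> affine hull B\<close>] by simp
  then show "aff_dim A = aff_dim B"
    by (rule aff_dim_affine_hull2)
next
  assume "aff_dim A = aff_dim B"
  then have "\<not> affine hull A \<subset> affine hull B"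
    using aff_dim_psubset[of A B] by auto
  then have "affine hull A = affine hull B"
    using hull_mono[OF assms(1)] by blast
  then show "aff_direction A = aff_direction B"
    by (simp add: aff_direction_def)
qed

lemma in_convex_hull_subset_card_aff_dim:
  fixes \<Omega> A :: "'a::euclidean_space set"
  assumes "finite \<Omega>" "A \<subseteq> \<Omega>" "\<rho> \<in> convex hull A" "aff_dim A < aff_dim \<Omega>"
  shows "\<exists>S\<subseteq>\<Omega>. finite S \<and> int (card S) = aff_dim \<Omega> \<and> \<rho> \<in> convex hull S"
proof -
  obtain S\<^sub>0 where "finite S\<^sub>0" "S\<^sub>0 \<subseteq> A" "int (card S\<^sub>0) \<le> aff_dim A + 1" "\<rho> \<in> convex hull S\<^sub>0"
    using assms(3) caratheodory_aff_dim[of A] by blast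
  define d where "d = aff_dim \<Omega>"
  have "int (card S\<^sub>0) \<le> d" "d \<le> int (card \<Omega>) - 1"
    using \<open>int (card S\<^sub>0) \<le> aff_dim A + 1\<close> assms(4) aff_dim_le_card[OF assms(1)]
    unfolding d_def by linarith+
  then have "card S\<^sub>0 \<le> nat d" "nat d \<le> card \<Omega>"
    by linarith+
  moreover have "S\<^sub>0 \<subseteq> \<Omega>"
    using \<open>S\<^sub>0 \<subseteq> A\<close> assms(2) by blast
  ultimately obtain S where "S\<^sub>0 \<subseteq> S" "S \<subseteq> \<Omega>" "card S = nat d"
    using exists_subset_between[OF _ _ _ assms(1)] by blast
  moreover have "int (card S) = d"
    using \<open>card S = nat d\<close> \<open>int (card S\<^sub>0) \<le> d\<close> by linarith
  moreover have "\<rho> \<in> convex hull S"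
    using \<open>\<rho> \<in> convex hull S\<^sub>0\<close> hull_mono[OF \<open>S\<^sub>0 \<subseteq> S\<close>] by blast
  moreover have "finite S"
    using \<open>S \<subseteq> \<Omega>\<close> assms(1) by (rule finite_subset)
  ultimately show ?thesis
    unfolding d_def by blast
qed

section \<open>The map \<iota>* in a weight basis\<close>

context weight_basis
begin

definition support_weights :: "complex^'n \<Rightarrow> 'v set"
  where "support_weights \<phi> = \<omega> ` {e\<in>F. cinner e \<phi> \<noteq> 0}"

lemma support_weights_subset: "support_weights \<phi> \<subseteq> \<omega> ` F"
  by (auto simp: support_weights_def)

lemma cinner_weight_vector_apply:
  assumes "e \<in> F"
  shows "cinner e (\<iota> v *v \<phi>) = of_real (\<omega> e \<bullet> v) * cinner e \<phi>"
  using assms by (simp add: hermitian_cinner_adjoint[OF hermitian] weight_vector cinner_scaleR_left)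

lemma cinner_parseval: "cinner \<phi> \<psi> = (\<Sum>e\<in>F. cnj (cinner e \<phi>) * cinner e \<psi>)"
proof -
  have "cinner \<phi> \<psi> = cinner \<phi> (\<Sum>e\<in>F. cinner e \<psi> *s e)"
    by (simp only: expansion)
  also have "\<dots> = (\<Sum>e\<in>F. cinner e \<psi> * cinner \<phi> e)"
    by (simp only: cinner_sum_right cinner_smult_right)
  also have "\<dots> = (\<Sum>e\<in>F. cnj (cinner e \<phi>) * cinner e \<psi>)"
    by (intro sum.cong refl) (subst cinner_commute[of \<phi>], rule mult.commute)
  finally show ?thesis .
qed

lemma inner_eq_sum: "\<phi> \<bullet> \<psi> = (\<Sum>e\<in>F. cinner e \<phi> \<bullet> cinner e \<psi>)"
  unfolding Re_cinner[symmetric] cinner_parseval[of \<phi> \<psi>] by (simp add: Re_sum inner_complex_def)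

lemma norm_sq_eq_sum: "(norm \<phi>)\<^sup>2 = (\<Sum>e\<in>F. (norm (cinner e \<phi>))\<^sup>2)"
  by (simp add: power2_norm_eq_inner inner_eq_sum)

lemma weights_eq: "weights \<iota> = \<omega> ` F"
proof
  show "\<omega> ` F \<subseteq> weights \<iota>"
  proof
    fix \<alpha> assume "\<alpha> \<in> \<omega> ` F"
    then obtain e where "e \<in> F" "\<alpha> = \<omega> e" by blast
    then have "e \<noteq> 0" and "\<forall>v. \<iota> v *v e = complex_of_real (\<alpha> \<bullet> v) *s e"
      using orthonormal[of e e] by (auto simp: weight_vector smult_of_real)
    then show "\<alpha> \<in> weights \<iota>"
      unfolding weights_def by blast
  qed
next
  show "weights \<iota> \<subseteq> \<omega> ` F"
  proof
    fix \<alpha> assume "\<alpha> \<in> weights \<iota>"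
    then obtain \<xi> where "\<xi> \<noteq> 0" and \<xi>: "\<And>v. \<iota> v *v \<xi> = (\<alpha> \<bullet> v) *\<^sub>R \<xi>"
      unfolding weights_def by (auto simp: smult_of_real)
    then obtain e where "e \<in> F" "cinner e \<xi> \<noteq> 0"
      using expansion[of \<xi>] by (metis (no_types, lifting) sum.neutral vector_smult_lzero)
    then have "\<omega> e \<bullet> v = \<alpha> \<bullet> v" for v
      using cinner_weight_vector_apply[of e v \<xi>] by (simp add: \<xi> cinner_scaleR_right)
    then have "\<omega> e = \<alpha>"
      by (metis euclidean_eqI inner_commute)
    then show "\<alpha> \<in> \<omega> ` F"
      using \<open>e \<in> F\<close> by blast
  qed
qed

lemma istar_eq: "istar \<iota> \<phi> = (1 / (norm \<phi>)\<^sup>2) *\<^sub>R (\<Sum>e\<in>F. (norm (cinner e \<phi>))\<^sup>2 *\<^sub>R \<omega> e)"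
  (is "_ = ?c *\<^sub>R ?S")
proof -
  have "Re (cinner \<phi> (\<iota> b *v \<phi>)) = ?S \<bullet> b" for b
  proof -
    have "cinner \<phi> (\<iota> b *v \<phi>) = (\<Sum>e\<in>F. of_real ((norm (cinner e \<phi>))\<^sup>2 * (\<omega> e \<bullet> b)))"
      unfolding cinner_parseval[of \<phi>]
      by (intro sum.cong refl) (simp add: cinner_weight_vector_apply complex_norm_square mult_ac del: of_real_power)
    then show ?thesis
      by (simp add: Re_sum inner_sum_left)
  qed
  moreover have "Re (cinner \<phi> \<phi>) = (norm \<phi>)\<^sup>2"
    by (simp add: Re_cinner power2_norm_eq_inner)
  ultimately have "istar \<iota> \<phi> = (\<Sum>b\<in>Basis. ((?c *\<^sub>R ?S) \<bullet> b) *\<^sub>R b)"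
    unfolding istar_def by simp
  also have "\<dots> = ?c *\<^sub>R ?S"
    by (rule euclidean_representation)
  finally show ?thesis .
qed

lemma istar_in_convex_hull_support:
  assumes "\<phi> \<noteq> 0"
  shows "istar \<iota> \<phi> \<in> convex hull (support_weights \<phi>)"
proof -
  define G where "G = {e\<in>F. cinner e \<phi> \<noteq> 0}"
  have "finite G"
    using finite_basis by (simp add: G_def)
  have "(\<Sum>e\<in>F. (norm (cinner e \<phi>))\<^sup>2 *\<^sub>R \<omega> e) = (\<Sum>e\<in>G. (norm (cinner e \<phi>))\<^sup>2 *\<^sub>R \<omega> e)"
    "(\<Sum>e\<in>F. (norm (cinner e \<phi>))\<^sup>2) = (\<Sum>e\<in>G. (norm (cinner e \<phi>))\<^sup>2)"
    by (auto simp: G_def finite_basis intro: sum.mono_neutral_right)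
  moreover have "(norm \<phi>)\<^sup>2 \<noteq> 0"
    using assms by simp
  ultimately have istar: "istar \<iota> \<phi> = (\<Sum>e\<in>G. ((norm (cinner e \<phi>))\<^sup>2 / (norm \<phi>)\<^sup>2) *\<^sub>R \<omega> e)"
    and total: "(\<Sum>e\<in>G. (norm (cinner e \<phi>))\<^sup>2 / (norm \<phi>)\<^sup>2) = 1"
    by (simp_all add: istar_eq scaleR_sum_right norm_sq_eq_sum[of \<phi>] flip: sum_divide_distrib)
  have "(\<Sum>e\<in>G. ((norm (cinner e \<phi>))\<^sup>2 / (norm \<phi>)\<^sup>2) *\<^sub>R \<omega> e) \<in> convex hull (\<omega> ` G)"
    using \<open>finite G\<close> total by (intro convex_sum convex_convex_hull) (auto intro: hull_inc)
  then show ?thesis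
    by (simp add: istar support_weights_def G_def)
qed

lemma istar_attains_convex_hull:
  assumes "S \<subseteq> \<omega> ` F" "\<rho> \<in> convex hull S"
  shows "\<exists>\<psi>. \<psi> \<noteq> 0 \<and> istar \<iota> \<psi> = \<rho> \<and> support_weights \<psi> \<subseteq> S"
proof -
  obtain E where "E \<subseteq> F" "inj_on \<omega> E" "S = \<omega> ` E"
    using assms(1) subset_image_inj by metis
  then have "finite E" "finite S"
    using finite_basis finite_subset by auto
  obtain u where u: "\<forall>\<alpha>\<in>S. 0 \<le> u \<alpha>" "sum u S = 1" "(\<Sum>\<alpha>\<in>S. u \<alpha> *\<^sub>R \<alpha>) = \<rho>"
    using assms(2) \<open>finite S\<close> by (auto simp: convex_hull_finite)
  define \<psi> where "\<psi> = (\<Sum>e\<in>E. sqrt (u (\<omega> e)) *\<^sub>R e)"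
  have coeff: "cinner e \<psi> = (if e \<in> E then of_real (sqrt (u (\<omega> e))) else 0)" if "e \<in> F" for e
  proof -
    have "cinner e \<psi> = (\<Sum>e'\<in>E. if e = e' then of_real (sqrt (u (\<omega> e'))) else 0)"
      unfolding \<psi>_def cinner_sum_right
      using that \<open>E \<subseteq> F\<close> by (intro sum.cong) (auto simp: cinner_scaleR_right orthonormal)
    then show ?thesis
      using \<open>finite E\<close> by simp
  qed
  have "(norm (cinner e \<psi>))\<^sup>2 = (if e \<in> E then u (\<omega> e) else 0)" if "e \<in> F" for e
    using coeff[OF that] u(1) \<open>S = \<omega> ` E\<close> by auto
  then have "(\<Sum>e\<in>F. (norm (cinner e \<psi>))\<^sup>2 *\<^sub>R f e) = (\<Sum>e\<in>F. if e \<in> E then u (\<omega> e) *\<^sub>R f e else 0)"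
    for f :: "complex^'n \<Rightarrow> 'a::real_vector"
    by (intro sum.cong) auto
  also have "\<dots> f = (\<Sum>e\<in>E. u (\<omega> e) *\<^sub>R f e)" for f :: "complex^'n \<Rightarrow> 'a::real_vector"
    using \<open>E \<subseteq> F\<close> finite_basis by (simp add: sum.inter_restrict[symmetric] Int_absorb1 Int_absorb2)
  finally have restrict: "(\<Sum>e\<in>F. (norm (cinner e \<psi>))\<^sup>2 *\<^sub>R f e) = (\<Sum>e\<in>E. u (\<omega> e) *\<^sub>R f e)"
    for f :: "complex^'n \<Rightarrow> 'a::real_vector" .
  have "(norm \<psi>)\<^sup>2 = 1"
    using restrict[of "\<lambda>_. 1::real"] u(2) \<open>inj_on \<omega> E\<close> \<open>S = \<omega> ` E\<close>
    by (simp add: norm_sq_eq_sum sum.reindex)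
  moreover have "(\<Sum>e\<in>F. (norm (cinner e \<psi>))\<^sup>2 *\<^sub>R \<omega> e) = \<rho>"
    using restrict[of \<omega>] u(3) \<open>inj_on \<omega> E\<close> \<open>S = \<omega> ` E\<close> by (simp add: sum.reindex)
  moreover have "support_weights \<psi> \<subseteq> S"
    using coeff \<open>S = \<omega> ` E\<close> by (auto simp: support_weights_def split: if_splits)
  ultimately show ?thesis
    by (intro exI[of _ \<psi>]) (auto simp: istar_eq)
qed

definition istar_deriv :: "complex^'n \<Rightarrow> complex^'n \<Rightarrow> 'v"
  where "istar_deriv \<phi> h =
    (2 / (norm \<phi>)\<^sup>2) *\<^sub>R (\<Sum>e\<in>F. (cinner e \<phi> \<bullet> cinner e h) *\<^sub>R (\<omega> e - istar \<iota> \<phi>))"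

lemma has_derivative_istar:
  assumes "\<phi> \<noteq> 0"
  shows "(istar \<iota> has_derivative istar_deriv \<phi>) (at \<phi>)"
proof -
  define S where "S x = (\<Sum>e\<in>F. (cinner e x \<bullet> cinner e x) *\<^sub>R \<omega> e)" for x
  define S' where "S' h = (\<Sum>e\<in>F. (cinner e \<phi> \<bullet> cinner e h + cinner e h \<bullet> cinner e \<phi>) *\<^sub>R \<omega> e)" for h
  have istar: "istar \<iota> = (\<lambda>x. inverse (x \<bullet> x) *\<^sub>R S x)"
    by (rule ext) (simp add: istar_eq S_def power2_norm_eq_inner divide_inverse)
  have "(S has_derivative S') (at \<phi>)"
    unfolding S_def S'_def
    by (intro has_derivative_sum has_derivative_scaleR_left has_derivative_inner
        bounded_linear_imp_has_derivative bounded_linear_cinner_right)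
  then have "((\<lambda>x. inverse (x \<bullet> x) *\<^sub>R S x) has_derivative
      (\<lambda>h. inverse (\<phi> \<bullet> \<phi>) *\<^sub>R S' h + (- (inverse (\<phi> \<bullet> \<phi>) * (\<phi> \<bullet> h + h \<bullet> \<phi>) * inverse (\<phi> \<bullet> \<phi>))) *\<^sub>R S \<phi>)) (at \<phi>)"
    using assms by (intro has_derivative_scaleR Deriv.has_derivative_inverse has_derivative_inner has_derivative_ident) auto
  moreover have "inverse (\<phi> \<bullet> \<phi>) *\<^sub>R S' h + (- (inverse (\<phi> \<bullet> \<phi>) * (\<phi> \<bullet> h + h \<bullet> \<phi>) * inverse (\<phi> \<bullet> \<phi>))) *\<^sub>R S \<phi>
      = istar_deriv \<phi> h" for h
  proof -
    define a where "a e = cinner e \<phi> \<bullet> cinner e h" for e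
    have "S' h = 2 *\<^sub>R (\<Sum>e\<in>F. a e *\<^sub>R \<omega> e)"
      by (simp add: S'_def a_def inner_commute[of "cinner _ h"] scaleR_sum_right)
    moreover have "\<phi> \<bullet> h + h \<bullet> \<phi> = 2 * (\<Sum>e\<in>F. a e)"
      by (simp add: a_def inner_commute[of h] inner_eq_sum[of \<phi> h])
    moreover have "istar_deriv \<phi> h
        = (2 / (\<phi> \<bullet> \<phi>)) *\<^sub>R ((\<Sum>e\<in>F. a e *\<^sub>R \<omega> e) - (\<Sum>e\<in>F. a e) *\<^sub>R istar \<iota> \<phi>)"
      by (simp add: istar_deriv_def a_def power2_norm_eq_inner scaleR_diff_right sum_subtractf
          scaleR_sum_left)
    ultimately show ?thesis
      by (simp add: istar algebra_simps divide_inverse)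
  qed
  ultimately show ?thesis
    unfolding istar by (simp add: fun_eq_iff[symmetric])
qed

lemma istar_deriv_component:
  assumes "e \<in> F"
  shows "istar_deriv \<phi> (cinner e \<phi> *s e)
    = (2 * (norm (cinner e \<phi>))\<^sup>2 / (norm \<phi>)\<^sup>2) *\<^sub>R (\<omega> e - istar \<iota> \<phi>)"
proof -
  have "cinner e' (cinner e \<phi> *s e) = (if e' = e then cinner e \<phi> else 0)" if "e' \<in> F" for e'
    using that assms by (simp add: cinner_smult_right orthonormal)
  then have "(cinner e' \<phi> \<bullet> cinner e' (cinner e \<phi> *s e)) *\<^sub>R (\<omega> e' - istar \<iota> \<phi>)
      = (if e' = e then (norm (cinner e \<phi>))\<^sup>2 *\<^sub>R (\<omega> e - istar \<iota> \<phi>) else 0)" if "e' \<in> F" for e'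
    using that by (simp add: power2_norm_eq_inner)
  then show ?thesis
    using assms finite_basis by (simp add: istar_deriv_def cong: sum.cong)
qed

lemma range_istar_deriv:
  assumes "\<phi> \<noteq> 0"
  shows "range (istar_deriv \<phi>) = span ((\<lambda>\<alpha>. \<alpha> - istar \<iota> \<phi>) ` support_weights \<phi>)"
    (is "_ = span ?G")
proof
  have summand: "(cinner e \<phi> \<bullet> cinner e h) *\<^sub>R (\<omega> e - istar \<iota> \<phi>) \<in> span ?G" if "e \<in> F" for e h
  proof (cases "cinner e \<phi> = 0")
    case False
    then have "\<omega> e - istar \<iota> \<phi> \<in> ?G"
      using that by (auto simp: support_weights_def)
    then show ?thesis
      by (intro span_scale span_base)
  qed (simp add: span_zero)
  have "istar_deriv \<phi> h \<in> span ?G" for h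
    unfolding istar_deriv_def by (rule span_scale, rule span_sum) (rule summand)
  then show "range (istar_deriv \<phi>) \<subseteq> span ?G"
    by blast
next
  have "linear (istar_deriv \<phi>)"
    using has_derivative_istar[OF assms] by (rule has_derivative_linear)
  moreover have "?G \<subseteq> range (istar_deriv \<phi>)"
  proof
    fix x assume "x \<in> ?G"
    then obtain e where e: "e \<in> F" "cinner e \<phi> \<noteq> 0" and x: "x = \<omega> e - istar \<iota> \<phi>"
      by (auto simp: support_weights_def)
    define c where "c = 2 * (norm (cinner e \<phi>))\<^sup>2 / (norm \<phi>)\<^sup>2"
    have "c \<noteq> 0"
      using assms e by (simp add: c_def)
    have "istar_deriv \<phi> ((1 / c) *\<^sub>R (cinner e \<phi> *s e)) = (1 / c) *\<^sub>R istar_deriv \<phi> (cinner e \<phi> *s e)"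
      by (rule linear_scale[OF \<open>linear (istar_deriv \<phi>)\<close>])
    also have "\<dots> = (1 / c) *\<^sub>R (c *\<^sub>R x)"
      unfolding istar_deriv_component[OF e(1)] c_def x ..
    also have "\<dots> = x"
      using \<open>c \<noteq> 0\<close> by simp
    finally show "x \<in> range (istar_deriv \<phi>)"
      by (metis rangeI)
  qed
  ultimately show "span ?G \<subseteq> range (istar_deriv \<phi>)"
    by (intro span_minimal linear_subspace_image[OF _ subspace_UNIV])
qed

lemma critical_value_iff_support:
  "critical_value \<iota> \<rho> \<longleftrightarrow>
    (\<exists>\<psi>. \<psi> \<noteq> 0 \<and> istar \<iota> \<psi> = \<rho> \<and> aff_dim (support_weights \<psi>) < aff_dim (\<omega> ` F))"
proof -
  have "range D \<noteq> aff_direction (\<omega> ` F) \<longleftrightarrow> aff_dim (support_weights \<psi>) < aff_dim (\<omega> ` F)"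
    if "\<psi> \<noteq> 0" and D: "(istar \<iota> has_derivative D) (at \<psi>)" for \<psi> D
  proof -
    have "D = istar_deriv \<psi>"
      using has_derivative_unique[OF D has_derivative_istar[OF \<open>\<psi> \<noteq> 0\<close>]] .
    moreover note sub = support_weights_subset[of \<psi>]
    moreover have hull: "istar \<iota> \<psi> \<in> affine hull (support_weights \<psi>)"
      using istar_in_convex_hull_support[OF \<open>\<psi> \<noteq> 0\<close>] convex_hull_subset_affine_hull by blast
    ultimately have "range D = aff_direction (support_weights \<psi>)"
      using \<open>\<psi> \<noteq> 0\<close> by (simp add: range_istar_deriv aff_direction_eq_span)
    then show ?thesis
      using aff_dim_subset[OF sub] aff_direction_eq_iff_aff_dim_eq[OF sub hull] by auto
  qed
  moreover have "\<exists>D. (istar \<iota> has_derivative D) (at \<psi>)" if "\<psi> \<noteq> 0" for \<psi>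
    using has_derivative_istar[OF that] by blast
  ultimately show ?thesis
    unfolding critical_value_def weights_eq by metis
qed

end

theorem proposition4p16:
  fixes \<iota> :: "'v::euclidean_space \<Rightarrow> complex^'n^'n" and W :: "complex^'n^'n" and \<rho> :: 'v
  assumes "abelian_theory \<iota> W"
    and "\<rho> \<in> convex hull (weights \<iota>)"
  shows "critical_value \<iota> \<rho> \<longleftrightarrow>
    (\<exists>S. S \<subseteq> weights \<iota> \<and> finite S \<and> int (card S) = aff_dim (convex hull (weights \<iota>))
         \<and> \<rho> \<in> convex hull S)"
proof -
  obtain F \<omega> where "weight_basis \<iota> F \<omega>"
    using exists_weight_basis[OF assms(1)] by blast
  then interpret weight_basis \<iota> F \<omega> .
  have "finite (\<omega> ` F)"
    using finite_basis by simp
  show ?thesis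
    unfolding weights_eq aff_dim_convex_hull
  proof
    assume "critical_value \<iota> \<rho>"
    then obtain \<psi> where "\<psi> \<noteq> 0" "istar \<iota> \<psi> = \<rho>" "aff_dim (support_weights \<psi>) < aff_dim (\<omega> ` F)"
      by (auto simp: critical_value_iff_support)
    then show "\<exists>S\<subseteq>\<omega> ` F. finite S \<and> int (card S) = aff_dim (\<omega> ` F) \<and> \<rho> \<in> convex hull S"
      using in_convex_hull_subset_card_aff_dim[OF \<open>finite (\<omega> ` F)\<close> support_weights_subset]
        istar_in_convex_hull_support by blast
  next
    assume "\<exists>S\<subseteq>\<omega> ` F. finite S \<and> int (card S) = aff_dim (\<omega> ` F) \<and> \<rho> \<in> convex hull S"
    then obtain S \<psi> where "finite S" "int (card S) = aff_dim (\<omega> ` F)"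
      and "\<psi> \<noteq> 0" "istar \<iota> \<psi> = \<rho>" "support_weights \<psi> \<subseteq> S"
      using istar_attains_convex_hull by metis
    moreover have "aff_dim (support_weights \<psi>) < aff_dim (\<omega> ` F)"
      using aff_dim_subset[OF \<open>support_weights \<psi> \<subseteq> S\<close>] aff_dim_le_card[OF \<open>finite S\<close>]
        \<open>int (card S) = aff_dim (\<omega> ` F)\<close> by linarith
    ultimately show "critical_value \<iota> \<rho>"
      by (auto simp: critical_value_iff_support)
  qed
qed

end
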